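(* Let $n\ge 1$. For $0\le j\le n-1$ let $P_j=\{Q\in\mathrm{Sym}_n(\mathbb{R}) : \mathrm{i}^-(Q)\le j\}$ and let $A_j=\partial P_j$ be its topological boundary in $\mathrm{Sym}_n(\mathbb{R})$. For $r\ge 0$ let $Z^{(r)}=\{Q\in\mathrm{Sym}_n(\mathbb{R}) : \dim\ker(Q)\ge r\}$, and let $I_r$ be the set of all subsets $\alpha\subseteq\{0,\dots,n-1\}$ consisting of $r$ consecutive integers. Then for every $r\ge 0$, $$Z^{(r)}=\bigcup_{\alpha\in I_r}\ \bigcap_{j\in\alpha} A_j .$$
   Context: $\mathrm{Sym}_n(\mathbb{R})$ is the space of real symmetric $n\times n$ matrices; $\mathrm{i}^-(Q)$ denotes the number of negative eigenvalues of $Q$ (negative inertia index). An intersection over the empty index set is understood to be all of $\mathrm{Sym}_n(\mathbb{R})$. *)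

theory Defs
  imports "HOL-Analysis.Analysis" "HOL-Computational_Algebra.Polynomial"
begin

text \<open>Real symmetric n x n matrices, with n = CARD('n).\<close>
definition Sym :: "(real^'n^'n) set" where
  "Sym = {Q. transpose Q = Q}"

definition charpoly :: "real^'n^'n \<Rightarrow> real poly" where
  "charpoly Q = det (\<chi> i j. (if i = j then [:0, 1:] else 0) - [:Q $ i $ j:])"

definition neg_index :: "real^'n^'n \<Rightarrow> nat" where
  "neg_index Q = (\<Sum>x\<in>{x::real. x < 0 \<and> poly (charpoly Q) x = 0}. order x (charpoly Q))"

definition P_set :: "nat \<Rightarrow> (real^'n^'n) set" where
  "P_set j = {Q \<in> Sym. neg_index Q \<le> j}"

definition A_set :: "nat \<Rightarrow> (real^'n^'n) set" where
  "A_set j = (subtopology euclidean Sym) frontier_of (P_set j)"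

definition Z_set :: "nat \<Rightarrow> (real^'n^'n) set" where
  "Z_set r = {Q \<in> Sym. dim {x. Q *v x = 0} \<ge> r}"

definition I_set :: "nat \<Rightarrow> nat \<Rightarrow> nat set set" where
  "I_set n r = {\<alpha>. \<exists>a. \<alpha> = {a..<a + r} \<and> a + r \<le> n}"

end

(*
  Diagonalise Q = P diag(d) P^T by an orthogonal P. Then i^-(Q) and dim ker Q count the negative
  and zero entries of d, and i^-(-Q) the positive ones, so i^-(Q) + i^-(-Q) + dim ker Q = n.
  The negative index is lower semicontinuous (a subspace on which the quadratic form is uniformly
  negative stays negative under small perturbations), hence P_j is closed, and its interior
  consists of the Q with i^-(Q) + dim ker Q <= j: shifting Q - tI with t > 0 small turns the kernel
  negative, while {Q. i^-(-Q) >= n - j} is an open neighbourhood contained in P_j. Therefore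
  Q lies on A_j exactly for i^-(Q) <= j < i^-(Q) + dim ker Q, a window of dim ker Q consecutive
  integers inside {0..n-1}, which contains r consecutive integers iff dim ker Q >= r.
*)

theory Submission
  imports Defs
begin

section \<open>The spectral theorem\<close>

definition diag_mat :: "('n \<Rightarrow> real) \<Rightarrow> real^'n^'n" where
  "diag_mat d = (\<chi> i j. if i = j then d i else 0)"

definition quad_form :: "real^'n^'n \<Rightarrow> real^'n \<Rightarrow> real" where
  "quad_form Q x = x \<bullet> (Q *v x)"

definition eigendecomposition :: "real^'n^'n \<Rightarrow> real^'n^'n \<Rightarrow> ('n \<Rightarrow> real) \<Rightarrow> bool" where
  "eigendecomposition Q P d \<longleftrightarrow> orthogonal_matrix P \<and> Q = P ** diag_mat d ** transpose P"

(* transpose P *v x is the coordinate vector of x in the orthonormal basis of columns of P. *)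
declare transpose_matrix_vector [simp del]

lemma diag_mat_mult_vec_component: "(diag_mat d *v x) $ i = d i * x $ i"
  unfolding diag_mat_def matrix_vector_mult_def
  by (auto simp: if_distrib if_distribR sum.delta[OF finite] cong: if_cong)

lemma matrix_mul_diag_mat_component: "(A ** diag_mat d) $ i $ j = A $ i $ j * d j"
  unfolding diag_mat_def matrix_matrix_mult_def
  by (auto simp: if_distrib if_distribR sum.delta'[OF finite] cong: if_cong)

lemma Sym_inner_commute:
  assumes "Q \<in> Sym" shows "x \<bullet> (Q *v y) = (Q *v x) \<bullet> y"
proof -
  have "x \<bullet> (Q *v y) = (transpose Q *v x) \<bullet> y"
    by (simp add: dot_lmul_matrix transpose_matrix_vector)
  with assms show ?thesis
    by (simp add: Sym_def)
qed

lemma quad_form_scaleR: "quad_form Q (a *\<^sub>R x) = a\<^sup>2 * quad_form Q x"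
  by (simp add: quad_form_def matrix_vector_mult_scaleR power2_eq_square)

lemma quad_form_max_on_subspace:
  assumes "subspace S" "S \<noteq> {0}"
  obtains v where "v \<in> S" "norm v = 1" "\<And>y. y \<in> S \<Longrightarrow> quad_form Q y \<le> quad_form Q v * (norm y)\<^sup>2"
proof -
  let ?K = "S \<inter> sphere 0 1"
  obtain s where s: "s \<in> S" "s \<noteq> 0"
    using assms subspace_0 by blast
  then have "s /\<^sub>R norm s \<in> ?K"
    using assms(1) by (simp add: subspace_scale)
  moreover have "compact ?K"
    by (simp add: assms(1) closed_Int_compact closed_subspace)
  moreover have "continuous_on ?K (quad_form Q)"
    unfolding quad_form_def by (intro continuous_intros)
  ultimately obtain v where v: "v \<in> ?K" and max: "\<And>y. y \<in> ?K \<Longrightarrow> quad_form Q y \<le> quad_form Q v"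
    using continuous_attains_sup[of ?K "quad_form Q"] by blast
  have "quad_form Q y \<le> quad_form Q v * (norm y)\<^sup>2" if "y \<in> S" for y
  proof (cases "y = 0")
    case False
    then have "quad_form Q (y /\<^sub>R norm y) \<le> quad_form Q v"
      using that assms(1) by (intro max) (simp add: subspace_scale)
    moreover have "quad_form Q y = (norm y)\<^sup>2 * quad_form Q (y /\<^sub>R norm y)"
      using False by (simp add: quad_form_scaleR power_inverse)
    ultimately show ?thesis
      by (metis mult.commute mult_left_mono zero_le_power2)
  qed (simp add: quad_form_def)
  with v that show thesis by auto
qed

lemma nonpos_if_le_mult_all_pos:
  fixes a b :: real
  assumes "\<And>t. t > 0 \<Longrightarrow> a \<le> t * b"
  shows "a \<le> 0"
proof (rule ccontr)
  assume "\<not> a \<le> 0"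
  define t where "t = a / (\<bar>b\<bar> + 1)"
  have t: "t > 0"
    using \<open>\<not> a \<le> 0\<close> by (simp add: t_def)
  have "a \<le> t * b"
    using t by (rule assms)
  also have "\<dots> \<le> t * \<bar>b\<bar>"
    using t by (simp add: mult_left_mono)
  also have "\<dots> < t * (\<bar>b\<bar> + 1)"
    using t by simp
  also have "\<dots> = a"
    by (simp add: t_def)
  finally show False
    by simp
qed

(* Moving the maximiser v towards the defect y = Qv - cv, which is orthogonal to v,
   raises the Rayleigh quotient to first order unless y = 0. *)

lemma quad_form_maximizer_is_eigenvector:
  assumes Q: "Q \<in> Sym" and S: "subspace S" and inv: "\<And>x. x \<in> S \<Longrightarrow> Q *v x \<in> S"
    and v: "v \<in> S" "norm v = 1"
    and max: "\<And>y. y \<in> S \<Longrightarrow> quad_form Q y \<le> quad_form Q v * (norm y)\<^sup>2"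
  shows "Q *v v = quad_form Q v *\<^sub>R v"
proof -
  define c where "c = quad_form Q v"
  define y where "y = Q *v v - c *\<^sub>R v"
  define w where "w = y \<bullet> y"
  define e where "e = y \<bullet> (Q *v y)"
  have vv: "v \<bullet> v = 1"
    using v(2) by (simp add: norm_eq_1)
  have yS: "y \<in> S"
    unfolding y_def using v(1) inv S by (simp add: subspace_diff subspace_scale)
  have vy: "v \<bullet> y = 0"
    unfolding y_def c_def quad_form_def by (simp add: inner_diff_right vv)
  have "Q *v v = y + c *\<^sub>R v"
    unfolding y_def by simp
  then have Qvy: "(Q *v v) \<bullet> y = w"
    using vy by (simp add: w_def inner_add_left)
  have "2 * w \<le> t * (c * w - e)" if t: "t > 0" for t
  proof -
    have "v + t *\<^sub>R y \<in> S"
      using v(1) yS S by (simp add: subspace_add subspace_scale)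
    then have "quad_form Q (v + t *\<^sub>R y) \<le> c * (norm (v + t *\<^sub>R y))\<^sup>2"
      unfolding c_def by (rule max)
    moreover have "quad_form Q (v + t *\<^sub>R y)
        = c + t * (v \<bullet> (Q *v y)) + t * (y \<bullet> (Q *v v)) + t\<^sup>2 * e"
      by (simp add: quad_form_def c_def e_def matrix_vector_right_distrib matrix_vector_mult_scaleR
          inner_add_left inner_add_right power2_eq_square distrib_left)
    moreover have "v \<bullet> (Q *v y) = w" "y \<bullet> (Q *v v) = w"
      using Sym_inner_commute[OF Q, of v y] Qvy by (simp_all add: inner_commute)
    moreover have "(norm (v + t *\<^sub>R y))\<^sup>2 = 1 + t\<^sup>2 * w"
      unfolding power2_norm_eq_inner using vy
      by (simp add: inner_add_left inner_add_right inner_commute vv w_def power2_eq_square)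
    ultimately have "t * (2 * w) \<le> t * (t * (c * w - e))"
      by (simp add: power2_eq_square algebra_simps)
    with t show ?thesis
      by simp
  qed
  then have "2 * w \<le> 0"
    by (rule nonpos_if_le_mult_all_pos)
  then have "y = 0"
    using inner_gt_zero_iff[of y] unfolding w_def by fastforce
  then show ?thesis
    unfolding y_def c_def by simp
qed

lemma Sym_invariant_subspace_orthonormal_eigenbasis:
  assumes Q: "Q \<in> Sym"
  shows "subspace S \<Longrightarrow> (\<And>x. x \<in> S \<Longrightarrow> Q *v x \<in> S) \<Longrightarrow>
    \<exists>B. B \<subseteq> S \<and> span B = S \<and> pairwise orthogonal B \<and>
        (\<forall>b\<in>B. norm b = 1 \<and> (\<exists>c. Q *v b = c *\<^sub>R b))"
proof (induction "dim S" arbitrary: S rule: less_induct)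
  case less
  show ?case
  proof (cases "S = {0}")
    case True
    then show ?thesis
      by (intro exI[of _ "{}"]) auto
  next
    case False
    obtain v where v: "v \<in> S" "norm v = 1"
      and max: "\<And>y. y \<in> S \<Longrightarrow> quad_form Q y \<le> quad_form Q v * (norm y)\<^sup>2"
      using quad_form_max_on_subspace[OF less.prems(1) False] by blast
    have eig: "Q *v v = quad_form Q v *\<^sub>R v"
      using quad_form_maximizer_is_eigenvector[OF Q less.prems v max] .
    have vv: "v \<bullet> v = 1"
      using v(2) by (simp add: norm_eq_1)
    define S' where "S' = S \<inter> {y. v \<bullet> y = 0}"
    have S': "subspace S'"
      unfolding S'_def by (intro subspace_inter less.prems(1) subspace_hyperplane)
    have inv': "Q *v x \<in> S'" if "x \<in> S'" for x
      using that less.prems(2) Sym_inner_commute[OF Q, of v x] eig by (simp add: S'_def)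
    have "v \<notin> S'"
      using vv by (simp add: S'_def)
    moreover have "S' \<subseteq> S"
      by (simp add: S'_def)
    ultimately have "S' \<subset> S"
      using v(1) by blast
    then have "dim S' < dim S"
      using dim_psubset[of S' S] S' less.prems(1) by (simp add: span_eq_iff[THEN iffD2])
    then obtain B' where B': "B' \<subseteq> S'" "span B' = S'" "pairwise orthogonal B'"
        "\<forall>b\<in>B'. norm b = 1 \<and> (\<exists>c. Q *v b = c *\<^sub>R b)"
      using less.hyps[OF _ S' inv'] by blast
    have "S \<subseteq> span (insert v B')"
    proof
      fix s assume s: "s \<in> S"
      have "s - (v \<bullet> s) *\<^sub>R v \<in> S'"
        using s v(1) less.prems(1) vv
        by (simp add: S'_def subspace_diff subspace_scale inner_diff_right)
      then have "s - (v \<bullet> s) *\<^sub>R v \<in> span (insert v B')"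
        using B'(2) span_mono[of B' "insert v B'"] by blast
      then show "s \<in> span (insert v B')"
        by (metis diff_add_cancel span_add span_base span_scale insertI1)
    qed
    moreover have "insert v B' \<subseteq> S"
      using B'(1) v(1) by (auto simp: S'_def)
    moreover have "span (insert v B') \<subseteq> S"
      using calculation(2) less.prems(1) by (simp add: span_minimal)
    moreover have "pairwise orthogonal (insert v B')"
      using B'(1,3) by (auto simp: pairwise_insert S'_def orthogonal_def inner_commute)
    ultimately show ?thesis
      using B'(4) v eig by (intro exI[of _ "insert v B'"]) blast
  qed
qed

theorem Sym_eigendecomposition:
  fixes Q :: "real^'n^'n"
  assumes Q: "Q \<in> Sym"
  obtains P d where "eigendecomposition Q P d"
proof -
  obtain B where B: "span B = UNIV" "pairwise orthogonal B"
      "\<forall>b\<in>B. norm b = 1 \<and> (\<exists>c. Q *v b = c *\<^sub>R b)"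
    using Sym_invariant_subspace_orthonormal_eigenbasis[OF Q, of UNIV] by auto
  have "independent B"
    using B(2,3) by (intro pairwise_orthogonal_independent) force+
  then have "finite B" "card B = CARD('n)"
    using B(1) dim_span_eq_card_independent[of B] by (auto intro: finiteI_independent)
  then obtain f where f: "bij_betw f (UNIV :: 'n set) B"
    using finite_same_card_bij[of "UNIV :: 'n set" B] by auto
  have fB: "f i \<in> B" for i
    using f bij_betwE by blast
  have f_orth: "orthogonal (f i) (f j)" if "i \<noteq> j" for i j
    using B(2) f that unfolding pairwise_def bij_betw_def inj_on_def by blast
  have f_norm: "norm (f i) = 1" for i
    using B(3) fB by blast
  have "\<forall>i. \<exists>c. Q *v f i = c *\<^sub>R f i"
    using B(3) fB by blast
  then obtain d where d: "\<And>i. Q *v f i = d i *\<^sub>R f i"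
    by metis
  define P where "P = (\<chi> i j. f j $ i)"
  have oP: "orthogonal_matrix P"
    by (simp add: orthogonal_matrix_orthonormal_columns column_def P_def f_orth f_norm)
  have "(Q ** P) $ i $ j = (P ** diag_mat d) $ i $ j" for i j
  proof -
    have "(Q ** P) $ i $ j = (Q *v f j) $ i"
      by (simp add: P_def matrix_matrix_mult_def matrix_vector_mult_def)
    then show ?thesis
      by (simp add: d matrix_mul_diag_mat_component P_def mult.commute)
  qed
  then have "Q ** P = P ** diag_mat d"
    by (simp add: vec_eq_iff)
  moreover have "Q = Q ** (P ** transpose P)"
    using oP by (simp add: orthogonal_matrix_def)
  ultimately have "Q = P ** diag_mat d ** transpose P"
    by (simp add: matrix_mul_assoc)
  with oP show thesis
    by (simp add: eigendecomposition_def that)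
qed

section \<open>Inertia and kernel of a diagonalised matrix\<close>

lemma orthogonal_matrix_mul_transpose_component:
  assumes "orthogonal_matrix P"
  shows "(\<Sum>k\<in>UNIV. P $ i $ k * P $ j $ k) = (if i = j then 1 else 0)"
proof -
  have "(P ** transpose P) $ i $ j = mat 1 $ i $ j"
    using assms by (simp add: orthogonal_matrix_def)
  then show ?thesis
    by (simp add: matrix_matrix_mult_def transpose_def mat_def)
qed

lemma matrix_mul_diag_mat_mul_transpose_component:
  "(P ** diag_mat d ** transpose P) $ i $ j = (\<Sum>k\<in>UNIV. P $ i $ k * d k * P $ j $ k)"
  by (simp add: matrix_matrix_mult_def[of "P ** diag_mat d"] matrix_mul_diag_mat_component
      transpose_def)

lemma eigendecomposition_affine:
  assumes "eigendecomposition Q P d"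
  shows "eigendecomposition (a *\<^sub>R Q + mat b) P (\<lambda>k. a * d k + b)"
proof -
  have P: "orthogonal_matrix P" and Q: "Q = P ** diag_mat d ** transpose P"
    using assms by (simp_all add: eigendecomposition_def)
  have "(P ** diag_mat (\<lambda>k. a * d k + b) ** transpose P) $ i $ j
      = a * (\<Sum>k\<in>UNIV. P $ i $ k * d k * P $ j $ k) + b * (\<Sum>k\<in>UNIV. P $ i $ k * P $ j $ k)"
    for i j
    by (simp add: matrix_mul_diag_mat_mul_transpose_component sum_distrib_left flip: sum.distrib)
      (simp add: algebra_simps)
  also have "\<dots> i j = (a *\<^sub>R Q + mat b) $ i $ j" for i j
    using orthogonal_matrix_mul_transpose_component[OF P, of i j]
    by (simp add: Q matrix_mul_diag_mat_mul_transpose_component mat_def)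
  finally show ?thesis
    using P by (simp add: eigendecomposition_def vec_eq_iff)
qed

lemma det_eigendecomposition:
  assumes "eigendecomposition Q P d"
  shows "det Q = (\<Prod>k\<in>UNIV. d k)"
proof -
  have "P ** transpose P = mat 1" and Q: "Q = P ** diag_mat d ** transpose P"
    using assms by (simp_all add: eigendecomposition_def orthogonal_matrix_def)
  then have "det P * det P = 1"
    by (metis det_I det_mul det_transpose)
  then have "det Q = det (diag_mat d)"
    unfolding Q by (simp add: det_mul ac_simps)
  also have "\<dots> = (\<Prod>k\<in>UNIV. d k)"
    by (subst det_diagonal) (simp_all add: diag_mat_def)
  finally show ?thesis .
qed

lemma poly_det: "poly (det A) x = det (\<chi> i j. poly (A $ i $ j) x)"
  by (simp add: det_def poly_sum poly_prod)

lemma charpoly_eigendecomposition: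
  assumes "eigendecomposition Q P d"
  shows "charpoly Q = (\<Prod>k\<in>UNIV. [:- d k, 1:])"
proof (rule poly_ext)
  fix x
  have "poly (charpoly Q) x = det ((-1) *\<^sub>R Q + mat x)"
    unfolding charpoly_def poly_det by (rule arg_cong[where f = det]) (simp add: vec_eq_iff mat_def)
  also have "\<dots> = (\<Prod>k\<in>UNIV. x - d k)"
    using det_eigendecomposition[OF eigendecomposition_affine[OF assms, of "-1" x]] by simp
  finally show "poly (charpoly Q) x = poly (\<Prod>k\<in>UNIV. [:- d k, 1:]) x"
    by (simp add: poly_prod)
qed

lemma order_prod_linear_factors:
  fixes d :: "'a \<Rightarrow> real"
  assumes "finite I"
  shows "order x (\<Prod>k\<in>I. [:- d k, 1:]) = card {k\<in>I. d k = x}"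
  using assms
proof (induction I rule: finite_induct)
  case (insert j I)
  let ?p = "\<Prod>k\<in>I. [:- d k, 1:]"
  have "?p \<noteq> 0"
    using insert.hyps(1) by (subst prod_zero_iff) auto
  then have nonzero: "[:- d j, 1:] * ?p \<noteq> 0"
    by (intro no_zero_divisors) simp_all
  have "order x ([:- d j, 1:] * ?p) = order x [:- d j, 1:] + card {k\<in>I. d k = x}"
    using order_mult[OF nonzero] insert.IH by simp
  then have "order x (\<Prod>k\<in>insert j I. [:- d k, 1:])
      = order x [:- d j, 1:] + card {k\<in>I. d k = x}"
    by (simp only: prod.insert[OF insert.hyps])
  moreover have "order x [:- d j, 1:] = (if d j = x then 1 else 0)"
    using order_power_n_n[of x 1] by (simp add: order_0I)
  moreover have "card {k\<in>insert j I. d k = x} = (if d j = x then 1 else 0) + card {k\<in>I. d k = x}"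
  proof (cases "d j = x")
    case True
    then have "{k\<in>insert j I. d k = x} = insert j {k\<in>I. d k = x}"
      by auto
    with True insert.hyps show ?thesis
      by simp
  next
    case False
    then have "{k\<in>insert j I. d k = x} = {k\<in>I. d k = x}"
      by auto
    with False show ?thesis
      by simp
  qed
  ultimately show ?case
    by simp
qed simp

lemma neg_index_eigendecomposition:
  assumes "eigendecomposition Q P d"
  shows "neg_index Q = card {k. d k < 0}"
proof -
  let ?N = "{k. d k < 0}"
  have cp: "charpoly Q = (\<Prod>k\<in>UNIV. [:- d k, 1:])"
    by (rule charpoly_eigendecomposition[OF assms])
  have "{x. x < 0 \<and> poly (charpoly Q) x = 0} = d ` ?N"
    unfolding cp by (auto simp: poly_prod)
  then have "neg_index Q = (\<Sum>x\<in>d ` ?N. card {k. d k = x})"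
    unfolding neg_index_def by (simp add: cp order_prod_linear_factors)
  also have "\<dots> = (\<Sum>x\<in>d ` ?N. card {k\<in>?N. d k = x})"
    by (intro sum.cong refl arg_cong[where f = card]) auto
  also have "\<dots> = card ?N"
    using sum.image_gen[of ?N "\<lambda>_. 1 :: nat" d] by simp
  finally show ?thesis .
qed

(* For orthogonal P this is the span of the columns of P indexed by K. *)
definition column_span :: "real^'n^'n \<Rightarrow> 'n set \<Rightarrow> (real^'n) set" where
  "column_span P K = {x. \<forall>k. k \<notin> K \<longrightarrow> (transpose P *v x) $ k = 0}"

lemma orthogonal_matrix_mult_vec_cancel:
  assumes "orthogonal_matrix P"
  shows "P *v (transpose P *v x) = x" "transpose P *v (P *v x) = x"
  using assms by (simp_all add: matrix_vector_mul_assoc orthogonal_matrix_def)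

lemma subspace_column_span:
  fixes P :: "real^'n^'n"
  shows "subspace (column_span P K)"
  by (simp add: column_span_def subspace_def matrix_vector_right_distrib matrix_vector_mult_scaleR)

lemma norm_orthogonal_matrix_mult_vec:
  fixes P :: "real^'n^'n"
  assumes "orthogonal_matrix P"
  shows "norm (P *v x) = norm x"
  using assms orthogonal_transformation_matrix[of "(*v) P"]
  by (simp add: orthogonal_transformation_norm matrix_of_matrix_vector_mul)

lemma dim_column_span:
  fixes P :: "real^'n^'n"
  assumes P: "orthogonal_matrix P"
  shows "dim (column_span P K) = card K"
proof -
  let ?Z = "{y :: real^'n. \<forall>k. k \<notin> K \<longrightarrow> y $ k = 0}"
  have eq: "column_span P K = (*v) P ` ?Z"
  proof (intro set_eqI iffI)
    fix x
    assume "x \<in> column_span P K"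
    then show "x \<in> (*v) P ` ?Z"
      using orthogonal_matrix_mult_vec_cancel(1)[OF P, of x, symmetric]
      unfolding column_span_def by blast
  next
    fix x
    assume "x \<in> (*v) P ` ?Z"
    then show "x \<in> column_span P K"
      by (auto simp: column_span_def orthogonal_matrix_mult_vec_cancel(2)[OF P])
  qed
  have "inj_on ((*v) P) (span ?Z)"
    by (rule inj_on_inverseI[where g = "(*v) (transpose P)"])
      (simp add: orthogonal_matrix_mult_vec_cancel(2)[OF P])
  then have "dim ((*v) P ` ?Z) = dim ?Z"
    by (rule dim_image_eq[OF matrix_vector_mul_linear])
  then show ?thesis
    using dim_substandard_cart[where 'a = real, of K] by (simp add: eq dim_vec_eq)
qed

lemma dim_kernel_eigendecomposition:
  fixes Q :: "real^'n^'n"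
  assumes "eigendecomposition Q P d"
  shows "dim {x. Q *v x = 0} = card {k. d k = 0}"
proof -
  have P: "orthogonal_matrix P" and Q: "Q = P ** diag_mat d ** transpose P"
    using assms by (auto simp: eigendecomposition_def)
  have "Q *v x = 0 \<longleftrightarrow> diag_mat d *v (transpose P *v x) = 0" for x
  proof -
    have "Q *v x = P *v (diag_mat d *v (transpose P *v x))"
      by (simp add: Q matrix_vector_mul_assoc matrix_mul_assoc)
    moreover have "P *v z = 0 \<longleftrightarrow> z = 0" for z
      using orthogonal_matrix_mult_vec_cancel(2)[OF P, of z] by auto
    ultimately show ?thesis
      by simp
  qed
  then have "{x. Q *v x = 0} = column_span P {k. d k = 0}"
    by (auto simp: column_span_def vec_eq_iff diag_mat_mult_vec_component)
  then show ?thesis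
    by (simp add: dim_column_span[OF P])
qed

lemma quad_form_eigendecomposition:
  assumes "eigendecomposition Q P d"
  shows "quad_form Q x = (\<Sum>k\<in>UNIV. d k * ((transpose P *v x) $ k)\<^sup>2)"
proof -
  let ?y = "transpose P *v x"
  have "Q *v x = P *v (diag_mat d *v ?y)"
    using assms by (simp add: eigendecomposition_def matrix_vector_mul_assoc matrix_mul_assoc)
  then have "quad_form Q x = ?y \<bullet> (diag_mat d *v ?y)"
    unfolding quad_form_def by (metis dot_lmul_matrix transpose_matrix_vector)
  then show ?thesis
    by (simp add: inner_vec_def diag_mat_mult_vec_component power2_eq_square ac_simps)
qed

lemma neg_index_add_neg_index_uminus:
  fixes Q :: "real^'n^'n"
  assumes "Q \<in> Sym"
  shows "neg_index Q + neg_index (- Q) + dim {x. Q *v x = 0} = CARD('n)"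
proof -
  obtain P d where Q: "eigendecomposition Q P d"
    using Sym_eigendecomposition[OF assms] .
  have "eigendecomposition (- Q) P (\<lambda>k. - d k)"
    using eigendecomposition_affine[OF Q, of "-1" 0] by simp
  then have "neg_index (- Q) = card {k. d k > 0}"
    by (simp add: neg_index_eigendecomposition)
  moreover have "card {k. d k < 0} + card {k. d k > 0} + card {k. d k = 0} = CARD('n)"
  proof -
    have "card ({k. d k < 0} \<union> {k. d k > 0}) = card {k. d k < 0} + card {k. d k > 0}"
      by (rule card_Un_disjoint) auto
    moreover have "card ({k. d k < 0} \<union> {k. d k > 0} \<union> {k. d k = 0})
        = card ({k. d k < 0} \<union> {k. d k > 0}) + card {k. d k = 0}"
      by (rule card_Un_disjoint) auto
    moreover have "{k. d k < 0} \<union> {k. d k > 0} \<union> {k. d k = 0} = UNIV"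
      by auto
    ultimately show ?thesis
      by simp
  qed
  ultimately show ?thesis
    using neg_index_eigendecomposition[OF Q] dim_kernel_eigendecomposition[OF Q] by simp
qed

section \<open>Lower semicontinuity of the negative index\<close>

lemma dim_le_neg_index_if_negative_definite:
  fixes Q :: "real^'n^'n"
  assumes Q: "Q \<in> Sym" and V: "subspace V"
    and neg: "\<And>x. x \<in> V \<Longrightarrow> x \<noteq> 0 \<Longrightarrow> quad_form Q x < 0"
  shows "dim V \<le> neg_index Q"
proof -
  obtain P d where Qd: "eigendecomposition Q P d"
    using Sym_eigendecomposition[OF Q] .
  have P: "orthogonal_matrix P"
    using Qd by (simp add: eigendecomposition_def)
  define W where "W = column_span P {k. 0 \<le> d k}"
  have W: "subspace W"
    unfolding W_def by (rule subspace_column_span)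
  have W_nonneg: "quad_form Q x \<ge> 0" if "x \<in> W" for x
  proof -
    have "d k * ((transpose P *v x) $ k)\<^sup>2 \<ge> 0" for k
      using that by (cases "0 \<le> d k") (auto simp: W_def column_span_def)
    then show ?thesis
      unfolding quad_form_eigendecomposition[OF Qd] by (simp add: sum_nonneg)
  qed
  have "V \<inter> W = {0}"
  proof
    show "V \<inter> W \<subseteq> {0}"
    proof
      fix x
      assume "x \<in> V \<inter> W"
      then show "x \<in> {0}"
        using neg[of x] W_nonneg[of x] by fastforce
    qed
    show "{0} \<subseteq> V \<inter> W"
      using subspace_0[OF V] subspace_0[OF W] by simp
  qed
  then have "dim V + dim W \<le> CARD('n)"
    using dim_sums_Int[OF V W] dim_subset_UNIV[of "{x + y |x y. x \<in> V \<and> y \<in> W}"] by simp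
  moreover have "dim W + card {k. d k < 0} = CARD('n)"
  proof -
    have "card ({k. 0 \<le> d k} \<union> {k. d k < 0}) = card {k. 0 \<le> d k} + card {k. d k < 0}"
      by (rule card_Un_disjoint) auto
    moreover have "{k. 0 \<le> d k} \<union> {k. d k < 0} = UNIV"
      by auto
    ultimately show ?thesis
      unfolding W_def dim_column_span[OF P] by simp
  qed
  ultimately show ?thesis
    using neg_index_eigendecomposition[OF Qd] by linarith
qed

lemma neg_index_uniformly_negative_subspace:
  fixes Q :: "real^'n^'n"
  assumes Q: "Q \<in> Sym"
  obtains V c where "subspace V" "dim V = neg_index Q" "c > 0"
    "\<And>x. x \<in> V \<Longrightarrow> quad_form Q x \<le> - c * (norm x)\<^sup>2"
proof -
  obtain P d where Qd: "eigendecomposition Q P d"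
    using Sym_eigendecomposition[OF Q] .
  have P: "orthogonal_matrix P"
    using Qd by (simp add: eigendecomposition_def)
  define V where "V = column_span P {k. d k < 0}"
  define c where "c = Min (insert 1 ((\<lambda>k. - d k) ` {k. d k < 0}))"
  have c: "c > 0" "\<And>k. d k < 0 \<Longrightarrow> c \<le> - d k"
    unfolding c_def by (auto intro: Min_le)
  have "quad_form Q x \<le> - c * (norm x)\<^sup>2" if x: "x \<in> V" for x
  proof -
    let ?y = "transpose P *v x"
    have "quad_form Q x = (\<Sum>k\<in>UNIV. d k * (?y $ k)\<^sup>2)"
      by (rule quad_form_eigendecomposition[OF Qd])
    also have "\<dots> \<le> (\<Sum>k\<in>UNIV. - c * (?y $ k)\<^sup>2)"
    proof (rule sum_mono)
      fix k
      show "d k * (?y $ k)\<^sup>2 \<le> - c * (?y $ k)\<^sup>2"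
      proof (cases "d k < 0")
        case True
        then show ?thesis
          using c(2)[OF True] by (intro mult_right_mono) simp_all
      next
        case False
        then show ?thesis
          using x by (simp add: V_def column_span_def)
      qed
    qed
    also have "\<dots> = - c * (\<Sum>k\<in>UNIV. (?y $ k)\<^sup>2)"
      by (simp add: sum_distrib_left)
    also have "(\<Sum>k\<in>UNIV. (?y $ k)\<^sup>2) = (norm ?y)\<^sup>2"
      unfolding power2_norm_eq_inner inner_vec_def by (simp add: power2_eq_square)
    also have "norm ?y = norm x"
      using P by (simp add: norm_orthogonal_matrix_mult_vec)
    finally show ?thesis .
  qed
  moreover have "subspace V"
    unfolding V_def by (rule subspace_column_span)
  moreover have "dim V = neg_index Q"
    unfolding V_def dim_column_span[OF P] neg_index_eigendecomposition[OF Qd] ..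
  ultimately show thesis
    using that c(1) by blast
qed

lemma quad_form_perturbation_le:
  fixes Q Q' :: "real^'n^'n"
  shows "quad_form Q' x \<le> quad_form Q x + real CARD('n) * real CARD('n) * norm (Q' - Q) * (norm x)\<^sup>2"
proof -
  let ?M = "Q' - Q"
  have "quad_form Q' x - quad_form Q x = x \<bullet> (?M *v x)"
    by (simp add: quad_form_def matrix_vector_mult_diff_rdistrib inner_diff_right)
  also have "\<dots> \<le> norm x * norm (?M *v x)"
    using Cauchy_Schwarz_ineq2[of x "?M *v x"] by simp
  also have "norm (?M *v x) \<le> onorm ((*v) ?M) * norm x"
    by (rule onorm[OF matrix_vector_mul_bounded_linear])
  also have "onorm ((*v) ?M) \<le> real CARD('n) * real CARD('n) * norm ?M"
  proof (rule onorm_le_matrix_component)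
    fix i j
    show "\<bar>?M $ i $ j\<bar> \<le> norm ?M"
      using component_le_norm_cart[of "?M $ i" j] Finite_Cartesian_Product.norm_nth_le[where x = ?M and i = i] by linarith
  qed
  finally have "quad_form Q' x - quad_form Q x
      \<le> norm x * (real CARD('n) * real CARD('n) * norm ?M * norm x)"
    by (simp add: mult_left_mono mult_right_mono)
  then show ?thesis
    by (simp add: power2_eq_square algebra_simps)
qed

lemma neg_index_lower_semicontinuous:
  fixes Q :: "real^'n^'n"
  assumes Q: "Q \<in> Sym"
  obtains e where "e > 0" "\<And>Q'. Q' \<in> Sym \<Longrightarrow> dist Q' Q < e \<Longrightarrow> neg_index Q \<le> neg_index Q'"
proof -
  obtain V c where V: "subspace V" "dim V = neg_index Q" and c: "c > 0"
    and neg: "\<And>x. x \<in> V \<Longrightarrow> quad_form Q x \<le> - c * (norm x)\<^sup>2"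
    using neg_index_uniformly_negative_subspace[OF Q] by blast
  define C where "C = real CARD('n) * real CARD('n)"
  define e where "e = c / (C + 1)"
  have C: "C \<ge> 0"
    by (simp add: C_def)
  show thesis
  proof
    show "e > 0"
      using c C by (simp add: e_def)
    fix Q'
    assume Q': "Q' \<in> Sym" and "dist Q' Q < e"
    then have "C * norm (Q' - Q) \<le> C * e"
      using C by (simp add: dist_norm mult_left_mono)
    also have "C * e < c"
      using c C by (simp add: e_def field_simps)
    finally have small: "C * norm (Q' - Q) - c < 0"
      by simp
    have "quad_form Q' x < 0" if "x \<in> V" "x \<noteq> 0" for x
    proof -
      have "quad_form Q' x \<le> (C * norm (Q' - Q) - c) * (norm x)\<^sup>2"
        using quad_form_perturbation_le[of Q' x Q] neg[OF that(1)] by (simp add: C_def algebra_simps)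
      also have "\<dots> < 0"
        using small that(2) by (simp add: mult_neg_pos)
      finally show ?thesis .
    qed
    then show "neg_index Q \<le> neg_index Q'"
      using dim_le_neg_index_if_negative_definite[OF Q' V(1)] V(2) by simp
  qed
qed

section \<open>The boundaries of the sets P_j\<close>

lemma Sym_iff: "Q \<in> Sym \<longleftrightarrow> (\<forall>i j. Q $ j $ i = Q $ i $ j)"
  by (auto simp: Sym_def transpose_def vec_eq_iff)

lemma subspace_Sym: "subspace Sym"
  by (simp add: subspace_def Sym_iff)

lemma mat_in_Sym: "mat a \<in> Sym"
  by (simp add: Sym_iff mat_def)

lemma openin_neg_index_ge: "openin (top_of_set Sym) {Q \<in> Sym. k \<le> neg_index Q}"
  unfolding openin_euclidean_subtopology_iff
proof (intro conjI ballI)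
  fix Q
  assume "Q \<in> {Q \<in> Sym. k \<le> neg_index Q}"
  then obtain e where "e > 0" "\<And>Q'. Q' \<in> Sym \<Longrightarrow> dist Q' Q < e \<Longrightarrow> k \<le> neg_index Q'"
    using neg_index_lower_semicontinuous[of Q] by (metis (mono_tags) mem_Collect_eq order_trans)
  then show "\<exists>e>0. \<forall>Q'\<in>Sym. dist Q' Q < e \<longrightarrow> Q' \<in> {Q \<in> Sym. k \<le> neg_index Q}"
    by blast
qed auto

lemma closedin_P_set: "closedin (top_of_set Sym) (P_set j)"
proof -
  have eq: "P_set j = topspace (top_of_set Sym) - {Q \<in> Sym. Suc j \<le> neg_index Q}"
    by (auto simp: P_set_def)
  show ?thesis
    unfolding eq by (rule closedin_diff[OF closedin_topspace openin_neg_index_ge])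
qed

lemma neg_index_add_dim_kernel_le_shift:
  fixes Q :: "real^'n^'n"
  assumes "Q \<in> Sym" "t > 0"
  shows "neg_index Q + dim {x. Q *v x = 0} \<le> neg_index (Q - mat t)"
proof -
  obtain P d where Qd: "eigendecomposition Q P d"
    using Sym_eigendecomposition[OF assms(1)] .
  have shift: "Q - mat t = 1 *\<^sub>R Q + mat (- t)"
    by (simp add: mat_def vec_eq_iff)
  have "eigendecomposition (Q - mat t) P (\<lambda>k. d k - t)"
    unfolding shift using eigendecomposition_affine[OF Qd, of 1 "- t"] by simp
  then have "neg_index (Q - mat t) = card {k. d k - t < 0}"
    by (rule neg_index_eigendecomposition)
  moreover have "card {k. d k < 0} + card {k. d k = 0} = card ({k. d k < 0} \<union> {k. d k = 0})"
    by (rule card_Un_disjoint[symmetric]) auto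
  moreover have "card ({k. d k < 0} \<union> {k. d k = 0}) \<le> card {k. d k - t < 0}"
    using assms(2) by (intro card_mono) auto
  ultimately show ?thesis
    using neg_index_eigendecomposition[OF Qd] dim_kernel_eigendecomposition[OF Qd] by linarith
qed

lemma scalar_shift_near:
  fixes Q :: "real^'n^'n"
  assumes e: "e > 0"
  obtains t where "t > 0" "dist (Q - mat t) Q < e"
proof -
  have norm1: "norm (mat 1 :: real^'n^'n) + 1 > 0"
    by (intro add_nonneg_pos) simp_all
  define t where "t = e / (norm (mat 1 :: real^'n^'n) + 1)"
  have t: "t > 0"
    unfolding t_def using e norm1 by simp
  have "mat t = t *\<^sub>R (mat 1 :: real^'n^'n)"
    by (simp add: mat_def vec_eq_iff)
  then have "dist (Q - mat t) Q = t * norm (mat 1 :: real^'n^'n)"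
    using t by (simp add: dist_norm)
  also have "\<dots> < t * (norm (mat 1 :: real^'n^'n) + 1)"
    using t by simp
  also have "\<dots> = e"
    unfolding t_def using norm1 by simp
  finally show thesis
    using t that by blast
qed

lemma interior_P_set_iff:
  fixes Q :: "real^'n^'n"
  assumes Q: "Q \<in> Sym"
  shows "Q \<in> (top_of_set Sym) interior_of (P_set j) \<longleftrightarrow> neg_index Q + dim {x. Q *v x = 0} \<le> j"
proof
  assume "Q \<in> (top_of_set Sym) interior_of (P_set j)"
  then obtain e where e: "e > 0"
    and ball: "\<And>Q'. Q' \<in> Sym \<Longrightarrow> dist Q' Q < e \<Longrightarrow> Q' \<in> P_set j"
    using openin_interior_of[of "top_of_set Sym" "P_set j"] interior_of_subset[of _ "P_set j"]
    unfolding openin_euclidean_subtopology_iff by blast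
  obtain t where t: "t > 0" "dist (Q - mat t) Q < e"
    using scalar_shift_near[OF e] .
  then have "Q - mat t \<in> P_set j"
    using Q by (intro ball) (simp_all add: subspace_diff subspace_Sym mat_in_Sym)
  then show "neg_index Q + dim {x. Q *v x = 0} \<le> j"
    using neg_index_add_dim_kernel_le_shift[OF Q t(1)] by (simp add: P_set_def)
next
  assume le: "neg_index Q + dim {x. Q *v x = 0} \<le> j"
  define T where "T = Sym \<inter> uminus -` {R \<in> Sym. CARD('n) - j \<le> neg_index (R :: real^'n^'n)}"
  have "openin (top_of_set Sym) T"
    unfolding T_def
    by (rule continuous_openin_preimage[OF continuous_on_minus[OF continuous_on_id] _ openin_neg_index_ge])
      (simp add: subspace_neg subspace_Sym)
  moreover have "T \<subseteq> P_set j"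
  proof
    fix R
    assume "R \<in> T"
    then have "R \<in> Sym" "CARD('n) - j \<le> neg_index (- R)"
      by (auto simp: T_def)
    then show "R \<in> P_set j"
      using neg_index_add_neg_index_uminus[of R] by (simp add: P_set_def)
  qed
  moreover have "Q \<in> T"
    using le Q neg_index_add_neg_index_uminus[OF Q] by (simp add: T_def subspace_neg subspace_Sym)
  ultimately show "Q \<in> (top_of_set Sym) interior_of (P_set j)"
    using interior_of_maximal by blast
qed

lemma A_set_iff:
  fixes Q :: "real^'n^'n"
  assumes "Q \<in> Sym"
  shows "Q \<in> A_set j \<longleftrightarrow> neg_index Q \<le> j \<and> j < neg_index Q + dim {x. Q *v x = 0}"
proof -
  have "A_set j = P_set j - (top_of_set Sym) interior_of (P_set j :: (real^'n^'n) set)"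
    unfolding A_set_def frontier_of_def closure_of_closedin[OF closedin_P_set] ..
  then have "Q \<in> A_set j \<longleftrightarrow> Q \<in> P_set j \<and> \<not> neg_index Q + dim {x. Q *v x = 0} \<le> j"
    by (simp add: interior_P_set_iff[OF assms])
  also have "Q \<in> P_set j \<longleftrightarrow> neg_index Q \<le> j"
    using assms by (simp add: P_set_def)
  finally show ?thesis
    by linarith
qed

lemma ex_consecutive_subinterval_iff:
  fixes p k n r :: nat
  assumes "p + k \<le> n"
  shows "(\<exists>a. a + r \<le> n \<and> (\<forall>j\<in>{a..<a + r}. p \<le> j \<and> j < p + k)) \<longleftrightarrow> r \<le> k"
proof
  assume "\<exists>a. a + r \<le> n \<and> (\<forall>j\<in>{a..<a + r}. p \<le> j \<and> j < p + k)"
  then obtain a where a: "\<forall>j\<in>{a..<a + r}. p \<le> j \<and> j < p + k"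
    by blast
  show "r \<le> k"
  proof (cases "r = 0")
    case False
    then have "p \<le> a" "a + r - 1 < p + k"
      using a by auto
    then show ?thesis
      by linarith
  qed simp
next
  assume "r \<le> k"
  then show "\<exists>a. a + r \<le> n \<and> (\<forall>j\<in>{a..<a + r}. p \<le> j \<and> j < p + k)"
    using assms by (intro exI[of _ p]) auto
qed

theorem proposition4:
  fixes r :: nat
  shows "(Z_set r :: (real^'n^'n) set) =
    (\<Union>\<alpha>\<in>I_set CARD('n) r. Sym \<inter> (\<Inter>j\<in>\<alpha>. A_set j))"
proof (intro set_eqI)
  fix Q :: "real^'n^'n"
  show "Q \<in> Z_set r \<longleftrightarrow> Q \<in> (\<Union>\<alpha>\<in>I_set CARD('n) r. Sym \<inter> (\<Inter>j\<in>\<alpha>. A_set j))"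
  proof (cases "Q \<in> Sym")
    case True
    have "neg_index Q + dim {x. Q *v x = 0} \<le> CARD('n)"
      using neg_index_add_neg_index_uminus[OF True] by linarith
    from ex_consecutive_subinterval_iff[OF this, of r] show ?thesis
      by (auto simp: Z_set_def I_set_def A_set_iff[OF True] True)
  qed (simp add: Z_set_def)
qed

end
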